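(* Let $n_1,n_2,n_3\in\mathbb{N}$, let $\sigma$ be a segment label map on $G=\{1,\dots,n_1\}\times\{1,\dots,n_2\}\times\{1,\dots,n_3\}$, fix any decomposition of $T$ into blocks, let $\tau=\mathrm{LABEL}(\sigma,T)$ and let $\tau'$ be the output of the block-wise method. Then $\tau$ and $\tau'$ are isomorphic with respect to the set of all 2-cells of $T$.
   Context: Voxel grid and segmentation: $G=\{1,\dots,n_1\}\times\{1,\dots,n_2\}\times\{1,\dots,n_3\}$; voxels $v,w$ are adjacent iff $\sum_i|v_i-w_i|=1$. A segment label map is $\sigma:G\to\mathbb{N}=\{1,2,\dots\}$ such that each level set $\sigma^{-1}(l)$ is connected w.r.t. this adjacency. Topological grid: $T=\{1,\dots,2n_1-1\}\times\{1,\dots,2n_2-1\}\times\{1,\dots,2n_3-1\}$; a cell with exactly $j$ odd coordinates is a $j$-cell. Voxel $r$ corresponds to the 3-cell $2r-1$. Two cells are 6-neighbors if they differ by $1$ in exactly one coordinate. For a $j$-cell $t$, $\Gamma(t)$ is the set of 6-neighbors of $t$ in $T$ that are $(j+1)$-cells. Cells $t_1,t_2$ are connected, $t_1\leftrightarrow t_2$, iff there is $t\in T$ with $t_1,t_2\in\Gamma(t)$. Procedure LABEL: for a voxel box $\prod_i\{a_i,\dots,b_i\}\subseteq G$ let $B=\prod_i\{2a_i-1,\dots,2b_i-1\}$ be its cell box. $\mathrm{LABEL}(\sigma,B)$ produces $\lambda:B\to\mathbb{N}_0$: (1) $\lambda(2r-1)=\sigma(r)$ for 3-cells. (2) For $j=2,1,0$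 in this order: for each $j$-cell $t\in B$ let $\theta(t)$ be the set of positive integers occurring exactly once in $(\lambda(s))_{s\in\Gamma(t)}$; $t$ is active iff $\theta(t)\ne\emptyset$, inactive $j$-cells get label $0$; the active $j$-cells of $B$ are partitioned into maximal sets of cells with equal $\theta$ that are connected by $\leftrightarrow$-paths inside the set; these classes are numbered $1,\dots,m_j(B)$ arbitrarily and each active $j$-cell gets its class number. Reference labeling: $\tau=\mathrm{LABEL}(\sigma,T)$. Block-wise method: for each axis $i$ choose odd integers $1=a^i_0<\dots<a^i_{m_i}=2n_i-1$; blocks are the boxes $\prod_i\{a^i_{k_i-1},\dots,a^i_{k_i}\}$. Step 1: $\lambda_B=\mathrm{LABEL}(\sigma,B)$ for each block. Step 2: with blocks ordered $B_1,\dots,B_K$, add offset $\sum_{k'<k}m_j(B_{k'})$ to each positive $j$-cell label of $\lambda_{B_k}$ ($j\in\{0,1,2\}$). Step 3: for $j\in\{1,2\}$, via union–find, unite the labels received in different blocks by any active $j$-cell lying in several blocks, and replace every positive $j$-cell label by its set representative. Step 4: for each 0-cell $t_0$ and each pair of distinct 1-cell labels occurring exactly once among the current labels of $\Gamma(t_0)$, merge the two labels if the corresponding 1-cells bound the same set of current 2-cell labels; if any merge took place at $t_0$, recompute the activity of $t_0$ and set its label to $0$ if inactive. The result is $\tau':T\to\mathbb{N}_0$. Isomorphism w.r.t. $U\subseteq T$: for all $u\in U$, $\tau(u)=0\Leftrightarrow\tau'(u)=0$, and for all $u,v\in U$, $\tau(u)=\tau(v)\Leftrightarrow\tau'(u)=\tau'(v)$.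 *)

theory Defs
  imports Main
begin

text \<open>Cells of the topological grid and voxels are both represented as integer triples.\<close>
type_synonym cell = "int \<times> int \<times> int"

text \<open>Number of odd coordinates: a cell with exactly j odd coordinates is a j-cell.\<close>
definition dimc :: "cell \<Rightarrow> nat" where
  "dimc t = (case t of (a, b, c) \<Rightarrow>
     (if odd a then 1 else 0) + (if odd b then 1 else 0) + (if odd c then 1 else 0))"

text \<open>L1 distance; two integer triples are 6-neighbours / adjacent iff it equals 1.\<close>
definition l1dist :: "cell \<Rightarrow> cell \<Rightarrow> int" where
  "l1dist s t = (case s of (a, b, c) \<Rightarrow> case t of (a', b', c') \<Rightarrow>
     \<bar>a - a'\<bar> + \<bar>b - b'\<bar> + \<bar>c - c'\<bar>)"

definition box :: "int \<times> int \<Rightarrow> int \<times> int \<Rightarrow> int \<times> int \<Rightarrow> cell set" where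
  "box I J K = {(a, b, c). fst I \<le> a \<and> a \<le> snd I \<and> fst J \<le> b \<and> b \<le> snd J
                         \<and> fst K \<le> c \<and> c \<le> snd K}"

definition vgrid :: "nat \<Rightarrow> nat \<Rightarrow> nat \<Rightarrow> cell set" where
  "vgrid n1 n2 n3 = box (1, int n1) (1, int n2) (1, int n3)"

definition tgrid :: "nat \<Rightarrow> nat \<Rightarrow> nat \<Rightarrow> cell set" where
  "tgrid n1 n2 n3 = box (1, 2 * int n1 - 1) (1, 2 * int n2 - 1) (1, 2 * int n3 - 1)"

definition connected_set :: "cell set \<Rightarrow> bool" where
  "connected_set S \<longleftrightarrow>
     (\<forall>x\<in>S. \<forall>y\<in>S. (x, y) \<in> {(u, v). u \<in> S \<and> v \<in> S \<and> l1dist u v = 1}\<^sup>*)"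

definition segment_label_map :: "nat \<Rightarrow> nat \<Rightarrow> nat \<Rightarrow> (cell \<Rightarrow> nat) \<Rightarrow> bool" where
  "segment_label_map n1 n2 n3 \<sigma> \<longleftrightarrow>
     (\<forall>r\<in>vgrid n1 n2 n3. 1 \<le> \<sigma> r) \<and>
     (\<forall>l. connected_set {r \<in> vgrid n1 n2 n3. \<sigma> r = l})"

text \<open>Gamma(t) taken inside the cell box B (the domain of the labeling).\<close>
definition cobd :: "cell set \<Rightarrow> cell \<Rightarrow> cell set" where
  "cobd B t = {s \<in> B. l1dist s t = 1 \<and> dimc s = dimc t + 1}"

definition cconn :: "cell set \<Rightarrow> cell \<Rightarrow> cell \<Rightarrow> bool" where
  "cconn Tg t1 t2 \<longleftrightarrow> (\<exists>t\<in>Tg. t1 \<in> cobd Tg t \<and> t2 \<in> cobd Tg t)"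

definition theta :: "(cell \<Rightarrow> nat) \<Rightarrow> cell set \<Rightarrow> cell \<Rightarrow> nat set" where
  "theta lab B t = {l. 0 < l \<and> card {s \<in> cobd B t. lab s = l} = 1}"

text \<open>The voxel r with 2r-1 = t.\<close>
definition voxel_of :: "cell \<Rightarrow> cell" where
  "voxel_of t = (case t of (a, b, c) \<Rightarrow> ((a + 1) div 2, (b + 1) div 2, (c + 1) div 2))"

text \<open>is_LABEL Tg sigma B lab: lab is a possible output of LABEL(sigma, B)
  (the numbering of classes being arbitrary), Tg being the full topological grid.\<close>
definition is_LABEL :: "cell set \<Rightarrow> (cell \<Rightarrow> nat) \<Rightarrow> cell set \<Rightarrow> (cell \<Rightarrow> nat) \<Rightarrow> bool" where
  "is_LABEL Tg \<sigma> B lab \<longleftrightarrow>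
     (\<forall>t\<in>B. dimc t = 3 \<longrightarrow> lab t = \<sigma> (voxel_of t)) \<and>
     (\<forall>j\<in>{0, 1, 2}.
        let A = {t \<in> B. dimc t = j \<and> theta lab B t \<noteq> {}} in
        (\<forall>t\<in>B. dimc t = j \<and> theta lab B t = {} \<longrightarrow> lab t = 0) \<and>
        (\<forall>s\<in>A. \<forall>t\<in>A. lab s = lab t \<longleftrightarrow>
           (theta lab B s = theta lab B t \<and>
            (s, t) \<in> {(x, y). x \<in> A \<and> y \<in> A \<and> theta lab B x = theta lab B s \<and>
                              theta lab B y = theta lab B s \<and> cconn Tg x y}\<^sup>*)) \<and>
        lab ` A = {1..card (lab ` A)})"

definition mcount :: "(cell \<Rightarrow> nat) \<Rightarrow> cell set \<Rightarrow> nat \<Rightarrow> nat" where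
  "mcount lab B j = card (lab ` {t \<in> B. dimc t = j \<and> 0 < lab t})"

definition valid_breaks :: "nat \<Rightarrow> int list \<Rightarrow> bool" where
  "valid_breaks n as \<longleftrightarrow> as \<noteq> [] \<and> hd as = 1 \<and> last as = 2 * int n - 1 \<and>
     sorted_wrt (<) as \<and> (\<forall>a\<in>set as. odd a)"

text \<open>Axis intervals {a_(k-1)..a_k}; in the degenerate case m = 0 (n = 1) the single interval {1..1}.\<close>
definition intervals :: "int list \<Rightarrow> (int \<times> int) list" where
  "intervals as = (if length as = 1 then [(hd as, hd as)] else zip as (tl as))"

definition blocks :: "int list \<Rightarrow> int list \<Rightarrow> int list \<Rightarrow> cell set set" where
  "blocks as1 as2 as3 = {box I J K | I J K.
     I \<in> set (intervals as1) \<and> J \<in> set (intervals as2) \<and> K \<in> set (intervals as3)}"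

text \<open>Output tau' of the block-wise method, on 2-cells (steps 1-3; step 4 only changes
  labels of 1-cells and 0-cells).  Blocks are ordered arbitrarily (list Bs), each block
  gets an arbitrary LABEL output, offsets are added, labels of 2-cells shared by several
  blocks are united (equivalence closure) and each label is replaced by a representative
  of its class.\<close>
definition blockwise_2cells ::
  "nat \<Rightarrow> nat \<Rightarrow> nat \<Rightarrow> (cell \<Rightarrow> nat) \<Rightarrow> int list \<Rightarrow> int list \<Rightarrow> int list \<Rightarrow> (cell \<Rightarrow> nat) \<Rightarrow> bool" where
  "blockwise_2cells n1 n2 n3 \<sigma> as1 as2 as3 \<tau>' \<longleftrightarrow>
    (\<exists>Bs lams rep.
      distinct Bs \<and> set Bs = blocks as1 as2 as3 \<and> length lams = length Bs \<and>
      (\<forall>k<length Bs. is_LABEL (tgrid n1 n2 n3) \<sigma> (Bs ! k) (lams ! k)) \<and>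
      (let off = (\<lambda>k. \<Sum>k'<k. mcount (lams ! k') (Bs ! k') 2);
           lab = (\<lambda>k t. (lams ! k) t + off k);
           S = {(lab k t, lab k' t) | k k' t. k < length Bs \<and> k' < length Bs \<and> k \<noteq> k' \<and>
                  t \<in> Bs ! k \<and> t \<in> Bs ! k' \<and> dimc t = 2 \<and>
                  0 < (lams ! k) t \<and> 0 < (lams ! k') t};
           R = (S \<union> S\<inverse>)\<^sup>*
       in (\<forall>k<length Bs. \<forall>t\<in>Bs ! k. dimc t = 2 \<and> 0 < (lams ! k) t \<longrightarrow>
              (lab k t, rep (lab k t)) \<in> R) \<and>
          (\<forall>l l'. (l, l') \<in> R \<longrightarrow> rep l = rep l') \<and>
          (\<forall>k<length Bs. \<forall>t\<in>Bs ! k. dimc t = 2 \<longrightarrow>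
              \<tau>' t = (if (lams ! k) t = 0 then 0 else rep (lab k t)))))"

definition label_iso :: "cell set \<Rightarrow> (cell \<Rightarrow> nat) \<Rightarrow> (cell \<Rightarrow> nat) \<Rightarrow> bool" where
  "label_iso U \<tau> \<tau>' \<longleftrightarrow>
     (\<forall>u\<in>U. \<tau> u = 0 \<longleftrightarrow> \<tau>' u = 0) \<and>
     (\<forall>u\<in>U. \<forall>v\<in>U. \<tau> u = \<tau> v \<longleftrightarrow> \<tau>' u = \<tau>' v)"

end

theory Submission
  imports Defs
begin

text \<open>Block boundaries have odd coordinates and a coface differs from a cell only in an even
  coordinate, so a block containing a cell contains all its cofaces. The cofaces of a 2-cell are
  the two voxels beside it, labelled by \<open>\<sigma>\<close> in every labeling; hence a 2-cell of a block has
  the same \<open>\<theta>\<close> in the block as in T, and a \<open>\<leftrightarrow>\<close>-path of equal-\<open>\<theta>\<close> cells inside a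
  block is one in T. So equal block labels give equal global labels, and since the offsets make
  the label ranges of different blocks disjoint, so does every union of Step 3. Conversely, two
  \<open>\<leftrightarrow>\<close>-connected 2-cells lie in a block containing their common 1-cell, where they get equal
  block labels; along a \<open>\<leftrightarrow>\<close>-path in T these blocks are chained by the unions across
  shared 2-cells.\<close>

definition coface_coord :: "int \<Rightarrow> int \<Rightarrow> bool" where
  "coface_coord z w \<longleftrightarrow> \<bar>w - z\<bar> \<le> 1 \<and> (odd z \<longrightarrow> w = z)"

definition coface_step :: "cell \<Rightarrow> cell \<Rightarrow> bool" where
  "coface_step u s \<longleftrightarrow> coface_coord (fst u) (fst s) \<and> coface_coord (fst (snd u)) (fst (snd s))
     \<and> coface_coord (snd (snd u)) (snd (snd s))"

lemma cobd_coface_step: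
  assumes "s \<in> cobd B u"
  shows "coface_step u s"
proof -
  obtain a b c where u: "u = (a, b, c)" by (cases u) auto
  obtain a' b' c' where s: "s = (a', b', c')" by (cases s) auto
  have dist: "\<bar>a' - a\<bar> + \<bar>b' - b\<bar> + \<bar>c' - c\<bar> = 1"
    and dim: "(if odd a' then 1 else 0) + (if odd b' then 1 else 0) + (if odd c' then 1 else (0::nat))
       = (if odd a then 1 else 0) + (if odd b then 1 else 0) + (if odd c then 1 else 0) + 1"
    using assms unfolding cobd_def u s l1dist_def dimc_def by auto
  from dist have "(a' = a \<and> b' = b \<and> \<bar>c' - c\<bar> = 1) \<or> (a' = a \<and> \<bar>b' - b\<bar> = 1 \<and> c' = c)
      \<or> (\<bar>a' - a\<bar> = 1 \<and> b' = b \<and> c' = c)"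
    by arith
  with dim show ?thesis
    unfolding u s coface_step_def coface_coord_def by (auto split: if_splits)
qed

lemma coface_coord_odd_interval:
  assumes "odd p" "odd q" "p \<le> z" "z \<le> q" "coface_coord z w"
  shows "p \<le> w \<and> w \<le> q"
  using assms unfolding coface_coord_def by (cases "odd z") (auto, presburger+)

lemma sorted_wrt_less_hd_last:
  fixes xs :: "int list"
  assumes "sorted_wrt (<) xs" "x \<in> set xs"
  shows "hd xs \<le> x \<and> x \<le> last xs"
  using assms by (induction xs) (auto intro: less_imp_le last_in_set)

lemma zip_tl_cover:
  fixes x :: int
  assumes "2 \<le> length xs" "hd xs \<le> x" "x \<le> last xs"
  shows "\<exists>I\<in>set (zip xs (tl xs)). fst I \<le> x \<and> x \<le> snd I"
  using assms
proof (induction xs)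
  case (Cons a ys)
  then obtain b zs where ys: "ys = b # zs" by (cases ys) auto
  show ?case
  proof (cases "x \<le> b")
    case False
    with Cons.prems ys have "2 \<le> length ys" "hd ys \<le> x" "x \<le> last ys"
      by (cases zs; auto)+
    with Cons.IH ys show ?thesis by auto
  qed (use Cons.prems ys in auto)
qed simp

lemma intervals_cover:
  assumes "as \<noteq> []" "hd as \<le> x" "x \<le> last as"
  shows "\<exists>I\<in>set (intervals as). fst I \<le> x \<and> x \<le> snd I"
proof (cases "length as = 1")
  case True
  then obtain a where "as = [a]" by (cases as) auto
  with assms show ?thesis by (simp add: intervals_def)
next
  case False
  moreover have "length as \<noteq> 0" using assms(1) by simp
  ultimately have "2 \<le> length as" by linarith
  with False zip_tl_cover[OF _ assms(2,3)] show ?thesis by (simp add: intervals_def)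
qed

lemma intervals_ends_mem:
  assumes "I \<in> set (intervals as)"
  shows "fst I \<in> set as \<and> snd I \<in> set as"
proof (cases I)
  case (Pair p q)
  with assms show ?thesis unfolding intervals_def
    by (auto split: if_splits dest: set_zip_leftD set_zip_rightD intro: list.set_sel(2) hd_in_set)
qed

lemma valid_breaks_intervals:
  assumes "valid_breaks n as" "I \<in> set (intervals as)"
  shows "odd (fst I) \<and> odd (snd I) \<and> 1 \<le> fst I \<and> snd I \<le> 2 * int n - 1"
  using assms intervals_ends_mem[OF assms(2)] sorted_wrt_less_hd_last[of as]
  unfolding valid_breaks_def by fastforce

locale block_decomposition =
  fixes n1 n2 n3 :: nat and as1 as2 as3 :: "int list"
  assumes breaks1: "valid_breaks n1 as1"
    and breaks2: "valid_breaks n2 as2"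
    and breaks3: "valid_breaks n3 as3"
begin

abbreviation grid :: "cell set" where
  "grid \<equiv> tgrid n1 n2 n3"

lemma block_cases:
  assumes "B \<in> blocks as1 as2 as3"
  obtains I J K where "B = box I J K"
    "odd (fst I)" "odd (snd I)" "1 \<le> fst I" "snd I \<le> 2 * int n1 - 1"
    "odd (fst J)" "odd (snd J)" "1 \<le> fst J" "snd J \<le> 2 * int n2 - 1"
    "odd (fst K)" "odd (snd K)" "1 \<le> fst K" "snd K \<le> 2 * int n3 - 1"
  using assms valid_breaks_intervals[OF breaks1] valid_breaks_intervals[OF breaks2]
    valid_breaks_intervals[OF breaks3]
  unfolding blocks_def by blast

lemma block_subset_grid:
  assumes "B \<in> blocks as1 as2 as3"
  shows "B \<subseteq> grid"
  using assms by (elim block_cases) (auto simp: tgrid_def box_def)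

lemma block_coface_closed:
  assumes "B \<in> blocks as1 as2 as3" "u \<in> B" "coface_step u s"
  shows "s \<in> B"
  using assms(1)
proof (elim block_cases)
  fix I J K assume B: "B = box I J K"
    and odd: "odd (fst I)" "odd (snd I)" "odd (fst J)" "odd (snd J)" "odd (fst K)" "odd (snd K)"
  obtain a b c where u: "u = (a, b, c)" by (cases u) auto
  obtain a' b' c' where s: "s = (a', b', c')" by (cases s) auto
  from assms(2,3) odd show "s \<in> B"
    using coface_coord_odd_interval[of "fst I" "snd I" a a']
      coface_coord_odd_interval[of "fst J" "snd J" b b']
      coface_coord_odd_interval[of "fst K" "snd K" c c']
    unfolding B u s box_def coface_step_def by auto
qed

lemma grid_covered_by_blocks:
  assumes "t \<in> grid"
  shows "\<exists>B\<in>blocks as1 as2 as3. t \<in> B"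
proof -
  obtain a b c where t: "t = (a, b, c)" by (cases t) auto
  have cover: "\<And>n as x. valid_breaks n as \<Longrightarrow> 1 \<le> x \<Longrightarrow> x \<le> 2 * int n - 1 \<Longrightarrow>
      \<exists>I\<in>set (intervals as). fst I \<le> x \<and> x \<le> snd I"
    by (rule intervals_cover) (auto simp: valid_breaks_def)
  from assms obtain I J K where "I \<in> set (intervals as1)" "J \<in> set (intervals as2)"
      "K \<in> set (intervals as3)" "t \<in> box I J K"
    using cover[OF breaks1, of a] cover[OF breaks2, of b] cover[OF breaks3, of c]
    unfolding t tgrid_def box_def by auto
  then show ?thesis unfolding blocks_def by blast
qed

lemma cobd_block:
  assumes "B \<in> blocks as1 as2 as3" "u \<in> B"
  shows "cobd B u = cobd grid u"
  using block_subset_grid[OF assms(1)] block_coface_closed[OF assms] cobd_coface_step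
  unfolding cobd_def by blast

lemma cofaces_in_common_block:
  assumes "t \<in> grid" "x \<in> cobd grid t" "y \<in> cobd grid t"
  shows "\<exists>B\<in>blocks as1 as2 as3. x \<in> B \<and> y \<in> B"
  using grid_covered_by_blocks[OF assms(1)] block_coface_closed
    cobd_coface_step[OF assms(2)] cobd_coface_step[OF assms(3)] by blast

end

definition active_2cells :: "(cell \<Rightarrow> nat) \<Rightarrow> cell set \<Rightarrow> cell set" where
  "active_2cells lab B = {t \<in> B. dimc t = 2 \<and> theta lab B t \<noteq> {}}"

definition theta_class_edges :: "cell set \<Rightarrow> (cell \<Rightarrow> nat) \<Rightarrow> cell set \<Rightarrow> cell \<Rightarrow> (cell \<times> cell) set" where
  "theta_class_edges Tg lab B s = {(x, y). x \<in> active_2cells lab B \<and> y \<in> active_2cells lab B \<and>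
     theta lab B x = theta lab B s \<and> theta lab B y = theta lab B s \<and> cconn Tg x y}"

lemma is_LABEL_2cells:
  assumes "is_LABEL Tg \<sigma> B lab"
  shows "\<forall>t\<in>B. dimc t = 2 \<and> theta lab B t = {} \<longrightarrow> lab t = 0"
    and "\<forall>s\<in>active_2cells lab B. \<forall>t\<in>active_2cells lab B. lab s = lab t \<longleftrightarrow>
           theta lab B s = theta lab B t \<and> (s, t) \<in> (theta_class_edges Tg lab B s)\<^sup>*"
    and "lab ` active_2cells lab B = {1..card (lab ` active_2cells lab B)}"
proof -
  have "2 \<in> {0, 1, 2::nat}" by simp
  with assms have "let A = {t \<in> B. dimc t = 2 \<and> theta lab B t \<noteq> {}} in
      (\<forall>t\<in>B. dimc t = 2 \<and> theta lab B t = {} \<longrightarrow> lab t = 0) \<and>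
      (\<forall>s\<in>A. \<forall>t\<in>A. lab s = lab t \<longleftrightarrow>
         (theta lab B s = theta lab B t \<and>
          (s, t) \<in> {(x, y). x \<in> A \<and> y \<in> A \<and> theta lab B x = theta lab B s \<and>
                            theta lab B y = theta lab B s \<and> cconn Tg x y}\<^sup>*)) \<and>
      lab ` A = {1..card (lab ` A)}"
    unfolding is_LABEL_def by blast
  then show "\<forall>t\<in>B. dimc t = 2 \<and> theta lab B t = {} \<longrightarrow> lab t = 0"
    and "\<forall>s\<in>active_2cells lab B. \<forall>t\<in>active_2cells lab B. lab s = lab t \<longleftrightarrow>
           theta lab B s = theta lab B t \<and> (s, t) \<in> (theta_class_edges Tg lab B s)\<^sup>*"
    and "lab ` active_2cells lab B = {1..card (lab ` active_2cells lab B)}"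
    unfolding Let_def active_2cells_def theta_class_edges_def by blast+
qed

lemma is_LABEL_3cell:
  "is_LABEL Tg \<sigma> B lab \<Longrightarrow> t \<in> B \<Longrightarrow> dimc t = 3 \<Longrightarrow> lab t = \<sigma> (voxel_of t)"
  unfolding is_LABEL_def by blast

lemma is_LABEL_pos_iff_active:
  assumes "is_LABEL Tg \<sigma> B lab" "u \<in> B" "dimc u = 2"
  shows "0 < lab u \<longleftrightarrow> u \<in> active_2cells lab B"
proof
  assume "0 < lab u"
  then show "u \<in> active_2cells lab B"
    using is_LABEL_2cells(1)[OF assms(1)] assms(2,3) unfolding active_2cells_def by auto
next
  assume "u \<in> active_2cells lab B"
  then have "lab u \<in> {1..card (lab ` active_2cells lab B)}"
    using is_LABEL_2cells(3)[OF assms(1)] by blast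
  then show "0 < lab u" by simp
qed

lemma is_LABEL_eq_iff:
  assumes "is_LABEL Tg \<sigma> B lab" "s \<in> active_2cells lab B" "t \<in> active_2cells lab B"
  shows "lab s = lab t \<longleftrightarrow>
    theta lab B s = theta lab B t \<and> (s, t) \<in> (theta_class_edges Tg lab B s)\<^sup>*"
  using is_LABEL_2cells(2)[OF assms(1)] assms(2,3) by blast

lemma is_LABEL_le_mcount:
  assumes "is_LABEL Tg \<sigma> B lab" "u \<in> B" "dimc u = 2"
  shows "lab u \<le> mcount lab B 2"
proof (cases "0 < lab u")
  case True
  have active: "{t \<in> B. dimc t = 2 \<and> 0 < lab t} = active_2cells lab B"
    using is_LABEL_pos_iff_active[OF assms(1)] unfolding active_2cells_def by blast
  from True have "lab u \<in> lab ` active_2cells lab B"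
    using is_LABEL_pos_iff_active[OF assms] by blast
  then show ?thesis
    using is_LABEL_2cells(3)[OF assms(1)] unfolding mcount_def active by auto
qed simp

lemma theta_cong:
  assumes "cobd B u = cobd B' u" "\<forall>s\<in>cobd B u. lab s = lab' s"
  shows "theta lab B u = theta lab' B' u"
proof -
  have "{s \<in> cobd B u. lab s = l} = {s \<in> cobd B' u. lab' s = l}" for l
    using assms by auto
  then show ?thesis by (simp add: theta_def)
qed

locale blockwise = block_decomposition +
  fixes \<sigma> \<tau> :: "cell \<Rightarrow> nat" and Bs :: "cell set list" and lams :: "(cell \<Rightarrow> nat) list"
  assumes LABEL_grid: "is_LABEL grid \<sigma> grid \<tau>"
    and set_Bs: "set Bs = blocks as1 as2 as3"
    and LABEL_block: "k < length Bs \<Longrightarrow> is_LABEL grid \<sigma> (Bs ! k) (lams ! k)"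
begin

definition offset :: "nat \<Rightarrow> nat" where
  "offset k = (\<Sum>k'<k. mcount (lams ! k') (Bs ! k') 2)"

definition glabel :: "nat \<Rightarrow> cell \<Rightarrow> nat" where
  "glabel k t = (lams ! k) t + offset k"

definition active_copy :: "nat \<Rightarrow> cell \<Rightarrow> bool" where
  "active_copy k t \<longleftrightarrow> k < length Bs \<and> t \<in> Bs ! k \<and> dimc t = 2 \<and> 0 < (lams ! k) t"

definition shared_pairs :: "(nat \<times> nat) set" where
  "shared_pairs = {(glabel k t, glabel k' t) | k k' t. k < length Bs \<and> k' < length Bs \<and> k \<noteq> k' \<and>
     t \<in> Bs ! k \<and> t \<in> Bs ! k' \<and> dimc t = 2 \<and> 0 < (lams ! k) t \<and> 0 < (lams ! k') t}"

lemma block_in_blocks: "k < length Bs \<Longrightarrow> Bs ! k \<in> blocks as1 as2 as3"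
  using set_Bs nth_mem by blast

lemma grid_covered: "u \<in> grid \<Longrightarrow> \<exists>k<length Bs. u \<in> Bs ! k"
  using grid_covered_by_blocks set_Bs by (metis in_set_conv_nth)

lemma block_theta_eq:
  assumes "k < length Bs" "u \<in> Bs ! k" "dimc u = 2"
  shows "theta (lams ! k) (Bs ! k) u = theta \<tau> grid u"
proof (rule theta_cong)
  show cobd_eq: "cobd (Bs ! k) u = cobd grid u"
    using cobd_block[OF block_in_blocks[OF assms(1)] assms(2)] .
  show "\<forall>s\<in>cobd (Bs ! k) u. (lams ! k) s = \<tau> s"
  proof
    fix s assume s: "s \<in> cobd (Bs ! k) u"
    then have "s \<in> Bs ! k" "s \<in> grid" "dimc s = 3"
      using cobd_eq assms(3) unfolding cobd_def by auto
    then show "(lams ! k) s = \<tau> s"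
      using is_LABEL_3cell[OF LABEL_grid] is_LABEL_3cell[OF LABEL_block[OF assms(1)]] by simp
  qed
qed

lemma block_active_iff:
  assumes "k < length Bs" "u \<in> Bs ! k" "dimc u = 2"
  shows "u \<in> active_2cells (lams ! k) (Bs ! k) \<longleftrightarrow> u \<in> active_2cells \<tau> grid"
  using block_theta_eq[OF assms] block_subset_grid[OF block_in_blocks[OF assms(1)]] assms(2,3)
  unfolding active_2cells_def by auto

lemma block_pos_iff:
  assumes "k < length Bs" "u \<in> Bs ! k" "dimc u = 2"
  shows "0 < (lams ! k) u \<longleftrightarrow> 0 < \<tau> u"
proof -
  have "u \<in> grid" using block_subset_grid[OF block_in_blocks[OF assms(1)]] assms(2) by blast
  then show ?thesis
    using is_LABEL_pos_iff_active[OF LABEL_block[OF assms(1)] assms(2,3)]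
      is_LABEL_pos_iff_active[OF LABEL_grid _ assms(3)] block_active_iff[OF assms] by simp
qed

lemma block_label_eq_imp_eq:
  assumes "active_copy k u" "active_copy k v" "(lams ! k) u = (lams ! k) v"
  shows "\<tau> u = \<tau> v"
proof -
  let ?B = "Bs ! k" and ?l = "lams ! k"
  from assms(1) have k: "k < length Bs" unfolding active_copy_def by simp
  note LB = LABEL_block[OF k]
  have act: "x \<in> active_2cells \<tau> grid" "theta ?l ?B x = theta \<tau> grid x"
    if "x \<in> active_2cells ?l ?B" for x
  proof -
    from that have "x \<in> ?B" "dimc x = 2" unfolding active_2cells_def by auto
    with that show "x \<in> active_2cells \<tau> grid" "theta ?l ?B x = theta \<tau> grid x"
      using block_active_iff[OF k] block_theta_eq[OF k] by simp_all
  qed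
  have uA: "u \<in> active_2cells ?l ?B"
    using assms(1) is_LABEL_pos_iff_active[OF LB, of u] unfolding active_copy_def by simp
  have vA: "v \<in> active_2cells ?l ?B"
    using assms(2) is_LABEL_pos_iff_active[OF LB, of v] unfolding active_copy_def by simp
  have theta_eq: "theta ?l ?B u = theta ?l ?B v"
    and path: "(u, v) \<in> (theta_class_edges grid ?l ?B u)\<^sup>*"
    using is_LABEL_eq_iff[OF LB uA vA] assms(3) by simp_all
  have "theta_class_edges grid ?l ?B u \<subseteq> theta_class_edges grid \<tau> grid u"
  proof clarify
    fix x y assume "(x, y) \<in> theta_class_edges grid ?l ?B u"
    then show "(x, y) \<in> theta_class_edges grid \<tau> grid u"
      using act[of x] act[of y] act(2)[OF uA] unfolding theta_class_edges_def by simp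
  qed
  with path have "(u, v) \<in> (theta_class_edges grid \<tau> grid u)\<^sup>*"
    using rtrancl_mono by blast
  moreover have "theta \<tau> grid u = theta \<tau> grid v"
    using theta_eq act(2)[OF uA] act(2)[OF vA] by simp
  ultimately show ?thesis
    using is_LABEL_eq_iff[OF LABEL_grid act(1)[OF uA] act(1)[OF vA]] by simp
qed

lemma glabel_bounds:
  assumes "active_copy k t"
  shows "offset k < glabel k t \<and> glabel k t \<le> offset (Suc k)"
proof -
  from assms have "0 < (lams ! k) t" "(lams ! k) t \<le> mcount (lams ! k) (Bs ! k) 2"
    using is_LABEL_le_mcount[OF LABEL_block] unfolding active_copy_def by auto
  then show ?thesis unfolding glabel_def offset_def by simp
qed

lemma glabel_eq_imp_same_block:
  assumes "active_copy k t" "active_copy k' t'" "glabel k t = glabel k' t'"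
  shows "k = k'"
proof -
  have separated: "glabel i s < glabel j s'" if "active_copy i s" "active_copy j s'" "i < j" for i j s s'
  proof -
    have "offset (Suc i) \<le> offset j"
      unfolding offset_def using \<open>i < j\<close> by (intro sum_mono2) auto
    with glabel_bounds[OF that(1)] glabel_bounds[OF that(2)] show ?thesis by linarith
  qed
  show ?thesis
  proof (cases k k' rule: linorder_cases)
    case less
    with separated[OF assms(1,2)] assms(3) show ?thesis by simp
  next
    case greater
    with separated[OF assms(2,1)] assms(3) show ?thesis by simp
  qed
qed

lemma glabel_eq_imp_eq:
  assumes "active_copy k t" "active_copy k' t'" "glabel k t = glabel k' t'"
  shows "\<tau> t = \<tau> t'"
proof -
  have "k = k'" using glabel_eq_imp_same_block[OF assms] .
  with assms have "active_copy k t'" "(lams ! k) t = (lams ! k) t'"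
    unfolding glabel_def by simp_all
  then show ?thesis using block_label_eq_imp_eq[OF assms(1)] by blast
qed

abbreviation merged :: "(nat \<times> nat) set" where
  "merged \<equiv> (shared_pairs \<union> shared_pairs\<inverse>)\<^sup>*"

lemma shared_pairsE:
  assumes "(M, M') \<in> shared_pairs \<union> shared_pairs\<inverse>"
  obtains a b s where "active_copy a s" "active_copy b s" "M = glabel a s" "M' = glabel b s"
  using assms unfolding shared_pairs_def active_copy_def by blast

lemma merged_preserves_class:
  assumes "(glabel k t, L) \<in> merged" "active_copy k t"
  shows "\<exists>k' t'. active_copy k' t' \<and> glabel k' t' = L \<and> \<tau> t' = \<tau> t"
  using assms(1)
proof (induction rule: rtrancl_induct)
  case base
  with assms(2) show ?case by blast
next
  case (step M M')
  then obtain k1 t1 where 1: "active_copy k1 t1" "glabel k1 t1 = M" "\<tau> t1 = \<tau> t" by blast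
  from step.hyps(2) obtain a b s where s: "active_copy a s" "active_copy b s"
    "M = glabel a s" "M' = glabel b s" by (rule shared_pairsE)
  have "\<tau> s = \<tau> t" using glabel_eq_imp_eq[OF 1(1) s(1)] 1 s(3) by simp
  with s show ?case by blast
qed

lemma merged_imp_eq:
  assumes "(glabel k u, glabel k' v) \<in> merged" "active_copy k u" "active_copy k' v"
  shows "\<tau> u = \<tau> v"
proof -
  obtain k'' t'' where "active_copy k'' t''" "glabel k'' t'' = glabel k' v" "\<tau> t'' = \<tau> u"
    using merged_preserves_class[OF assms(1,2)] by blast
  with glabel_eq_imp_eq[OF _ assms(3)] show ?thesis by metis
qed

lemma same_cell_merged:
  assumes "active_copy k u" "k' < length Bs" "u \<in> Bs ! k'"
  shows "(glabel k u, glabel k' u) \<in> merged"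
proof (cases "k = k'")
  case False
  from assms have "0 < (lams ! k') u"
    using block_pos_iff[of k u] block_pos_iff[of k' u] unfolding active_copy_def by simp
  with assms False have "(glabel k u, glabel k' u) \<in> shared_pairs"
    unfolding shared_pairs_def active_copy_def by blast
  then show ?thesis by blast
qed simp

lemma connected_cells_block_label:
  assumes "x \<in> active_2cells \<tau> grid" "y \<in> active_2cells \<tau> grid"
    "theta \<tau> grid x = theta \<tau> grid y" "cconn grid x y"
  shows "\<exists>k<length Bs. x \<in> Bs ! k \<and> y \<in> Bs ! k \<and> (lams ! k) x = (lams ! k) y"
proof -
  obtain t where "t \<in> grid" "x \<in> cobd grid t" "y \<in> cobd grid t"
    using assms(4) unfolding cconn_def by blast
  then obtain k where k: "k < length Bs" "x \<in> Bs ! k" "y \<in> Bs ! k"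
    using cofaces_in_common_block set_Bs by (metis in_set_conv_nth)
  have dims: "dimc x = 2" "dimc y = 2" using assms(1,2) unfolding active_2cells_def by auto
  let ?B = "Bs ! k" and ?l = "lams ! k"
  have theta: "theta ?l ?B x = theta \<tau> grid x" "theta ?l ?B y = theta \<tau> grid y"
    using block_theta_eq[OF k(1)] k dims by simp_all
  have xA: "x \<in> active_2cells ?l ?B" and yA: "y \<in> active_2cells ?l ?B"
    using block_active_iff[OF k(1)] k dims assms(1,2) by simp_all
  have "(x, y) \<in> theta_class_edges grid ?l ?B x"
    using xA yA theta assms(3,4) unfolding theta_class_edges_def by simp
  then have "?l x = ?l y"
    using is_LABEL_eq_iff[OF LABEL_block[OF k(1)] xA yA] theta assms(3) by blast
  with k show ?thesis by blast
qed

lemma class_path_imp_merged: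
  assumes "u \<in> active_2cells \<tau> grid" "(u, v) \<in> (theta_class_edges grid \<tau> grid u)\<^sup>*"
    "active_copy k u" "k' < length Bs" "v \<in> Bs ! k'"
  shows "(glabel k u, glabel k' v) \<in> merged"
  using assms(2,4,5)
proof (induction arbitrary: k' rule: rtrancl_induct)
  case base
  with assms(3) show ?case by (rule same_cell_merged)
next
  case (step x y)
  from step.hyps(2) have x: "x \<in> active_2cells \<tau> grid" and y: "y \<in> active_2cells \<tau> grid"
    and "theta \<tau> grid x = theta \<tau> grid y" "cconn grid x y"
    unfolding theta_class_edges_def by auto
  then obtain k0 where k0: "k0 < length Bs" "x \<in> Bs ! k0" "y \<in> Bs ! k0"
    "(lams ! k0) x = (lams ! k0) y"
    using connected_cells_block_label by blast
  have "dimc y = 2" "0 < \<tau> y"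
    using y is_LABEL_pos_iff_active[OF LABEL_grid] unfolding active_2cells_def by auto
  then have y0: "active_copy k0 y"
    using block_pos_iff[OF k0(1,3)] k0 unfolding active_copy_def by simp
  have "(glabel k u, glabel k0 x) \<in> merged" using step.IH k0 by blast
  also have "glabel k0 x = glabel k0 y" using k0(4) unfolding glabel_def by simp
  also have "(glabel k0 y, glabel k' y) \<in> merged"
    using same_cell_merged[OF y0 step.prems] .
  finally show ?case .
qed

theorem merged_iff_eq:
  assumes "active_copy k u" "active_copy k' v"
  shows "(glabel k u, glabel k' v) \<in> merged \<longleftrightarrow> \<tau> u = \<tau> v"
proof
  assume "\<tau> u = \<tau> v"
  have active: "t \<in> active_2cells \<tau> grid" if "active_copy i t" for i t
    using that block_active_iff is_LABEL_pos_iff_active[OF LABEL_block]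
    unfolding active_copy_def by blast
  with \<open>\<tau> u = \<tau> v\<close> assms have "(u, v) \<in> (theta_class_edges grid \<tau> grid u)\<^sup>*"
    using is_LABEL_eq_iff[OF LABEL_grid] by blast
  with active[OF assms(1)] assms show "(glabel k u, glabel k' v) \<in> merged"
    using class_path_imp_merged unfolding active_copy_def by blast
qed (use merged_imp_eq assms in blast)

end

locale blockwise_output = blockwise +
  fixes rep :: "nat \<Rightarrow> nat" and \<tau>' :: "cell \<Rightarrow> nat"
  assumes rep_merged: "active_copy k t \<Longrightarrow> (glabel k t, rep (glabel k t)) \<in> merged"
    and rep_respects: "(l, l') \<in> merged \<Longrightarrow> rep l = rep l'"
    and labeled_output: "k < length Bs \<Longrightarrow> t \<in> Bs ! k \<Longrightarrow> dimc t = 2 \<Longrightarrow>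
      \<tau>' t = (if (lams ! k) t = 0 then 0 else rep (glabel k t))"
begin

lemma rep_eq_iff_merged:
  assumes "active_copy k u" "active_copy k' v"
  shows "rep (glabel k u) = rep (glabel k' v) \<longleftrightarrow> (glabel k u, glabel k' v) \<in> merged"
proof
  assume eq: "rep (glabel k u) = rep (glabel k' v)"
  have "(rep (glabel k' v), glabel k' v) \<in> merged"
    by (rule symD[OF sym_rtrancl[OF sym_Un_converse] rep_merged[OF assms(2)]])
  with rep_merged[OF assms(1)] eq show "(glabel k u, glabel k' v) \<in> merged"
    by (simp add: rtrancl_trans)
qed (rule rep_respects)

lemma rep_pos:
  assumes "active_copy k t"
  shows "0 < rep (glabel k t)"
proof -
  obtain k' t' where "active_copy k' t'" "glabel k' t' = rep (glabel k t)"
    using merged_preserves_class[OF rep_merged[OF assms] assms] by blast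
  then show ?thesis unfolding active_copy_def glabel_def by auto
qed

lemma grid_2cell_in_block:
  assumes "u \<in> grid" "dimc u = 2"
  obtains k where "k < length Bs" "u \<in> Bs ! k" "0 < \<tau> u \<longrightarrow> active_copy k u"
proof -
  obtain k where k: "k < length Bs" "u \<in> Bs ! k" using grid_covered[OF assms(1)] by blast
  moreover have "0 < \<tau> u \<longrightarrow> active_copy k u"
    using block_pos_iff[OF k assms(2)] k assms(2) unfolding active_copy_def by simp
  ultimately show thesis by (rule that)
qed

lemma labeled_output_active:
  assumes "active_copy k t"
  shows "\<tau>' t = rep (glabel k t)"
  using assms labeled_output[of k t] unfolding active_copy_def by auto

lemma output_zero_iff:
  assumes "u \<in> grid" "dimc u = 2"
  shows "\<tau>' u = 0 \<longleftrightarrow> \<tau> u = 0"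
proof -
  obtain k where k: "k < length Bs" "u \<in> Bs ! k" "0 < \<tau> u \<longrightarrow> active_copy k u"
    using grid_2cell_in_block[OF assms] .
  show ?thesis
  proof (cases "\<tau> u = 0")
    case True
    then show ?thesis
      using labeled_output[OF k(1,2) assms(2)] block_pos_iff[OF k(1,2) assms(2)] by simp
  next
    case False
    then have "active_copy k u" using k(3) by simp
    with False show ?thesis using labeled_output_active rep_pos by simp
  qed
qed

lemma active_copy_exists:
  assumes "u \<in> grid" "dimc u = 2" "0 < \<tau> u"
  obtains k where "active_copy k u"
  using grid_2cell_in_block[OF assms(1,2)] assms(3) by blast

theorem label_iso_2cells: "label_iso {t \<in> grid. dimc t = 2} \<tau> \<tau>'"
  unfolding label_iso_def
proof (intro conjI ballI)
  fix u assume "u \<in> {t \<in> grid. dimc t = 2}"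
  then show "\<tau> u = 0 \<longleftrightarrow> \<tau>' u = 0" using output_zero_iff[of u] by simp
next
  fix u v assume "u \<in> {t \<in> grid. dimc t = 2}" "v \<in> {t \<in> grid. dimc t = 2}"
  then have u: "u \<in> grid" "dimc u = 2" and v: "v \<in> grid" "dimc v = 2" by simp_all
  show "\<tau> u = \<tau> v \<longleftrightarrow> \<tau>' u = \<tau>' v"
  proof (cases "\<tau> u = 0 \<or> \<tau> v = 0")
    case True
    with output_zero_iff[OF u] output_zero_iff[OF v] show ?thesis by force
  next
    case False
    then have "0 < \<tau> u" "0 < \<tau> v" by simp_all
    then obtain k k' where copies: "active_copy k u" "active_copy k' v"
      using active_copy_exists[OF u] active_copy_exists[OF v] by metis
    have "\<tau>' u = \<tau>' v \<longleftrightarrow> rep (glabel k u) = rep (glabel k' v)"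
      using labeled_output_active[OF copies(1)] labeled_output_active[OF copies(2)] by simp
    also have "\<dots> \<longleftrightarrow> (glabel k u, glabel k' v) \<in> merged"
      by (rule rep_eq_iff_merged[OF copies])
    also have "\<dots> \<longleftrightarrow> \<tau> u = \<tau> v"
      by (rule merged_iff_eq[OF copies])
    finally show ?thesis by blast
  qed
qed

end

theorem proposition2:
  fixes n1 n2 n3 :: nat and \<sigma> \<tau> \<tau>' :: "cell \<Rightarrow> nat" and as1 as2 as3 :: "int list"
  assumes "1 \<le> n1" and "1 \<le> n2" and "1 \<le> n3"
    and "segment_label_map n1 n2 n3 \<sigma>"
    and "valid_breaks n1 as1" and "valid_breaks n2 as2" and "valid_breaks n3 as3"
    and "is_LABEL (tgrid n1 n2 n3) \<sigma> (tgrid n1 n2 n3) \<tau>"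
    and "blockwise_2cells n1 n2 n3 \<sigma> as1 as2 as3 \<tau>'"
  shows "label_iso {t \<in> tgrid n1 n2 n3. dimc t = 2} \<tau> \<tau>'"
  using assms(9) unfolding blockwise_2cells_def Let_def
  apply (elim exE conjE)
  subgoal premises prems for Bs lams rep
  proof -
    interpret blockwise n1 n2 n3 as1 as2 as3 \<sigma> \<tau> Bs lams
      using assms(5-8) prems by unfold_locales auto
    interpret blockwise_output n1 n2 n3 as1 as2 as3 \<sigma> \<tau> Bs lams rep \<tau>'
      using prems[folded offset_def, folded glabel_def, folded shared_pairs_def]
      by unfold_locales (auto simp: active_copy_def)
    show ?thesis by (rule label_iso_2cells)
  qed
  done

end
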